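(* Let $a$ be a primitive element of $GF(2^m)$, $n\le 2^m-1$, and $1\le k\le d\le n-1$. Let $g(x)=\prod_{j=1}^{n-k}(x-a^j)=\sum_{i=0}^{n-k}g_ix^i$ and $f(x)=\prod_{j=1}^{n-d}(x-a^j)=\sum_{i=0}^{n-d}f_ix^i$. Let $G_k$ be the $k\times n$ matrix whose $r$-th row ($r=1,\dots,k$) is $(0,\dots,0,g_0,g_1,\dots,g_{n-k},0,\dots,0)$ with $r-1$ leading zeros, and let $B$ be the $(d-k)\times n$ matrix whose $r$-th row ($r=1,\dots,d-k$) is $(0,\dots,0,f_0,f_1,\dots,f_{n-d},0,\dots,0)$ with $r-1$ leading zeros. Then the $d\times n$ matrix $G=\begin{bmatrix}G_k\\ B\end{bmatrix}$ has rank $d$; that is, it is a generator matrix of the $[n,d]$ Reed–Solomon code generated by $f(x)$ (the code underlying the minimum-bandwidth regenerating code).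
   Context: The $[n,d]$ Reed–Solomon code generated by $f(x)$ consists of all vectors $(c_0,\dots,c_{n-1})\in GF(2^m)^n$ whose polynomial $\sum_i c_ix^i$ is divisible by $f(x)$. *)

theory Defs
  imports "Jordan_Normal_Form.DL_Rank" "HOL-Computational_Algebra.Polynomial"
begin

definition primitive_element :: "'a::{field,finite} \<Rightarrow> bool" where
  "primitive_element a \<longleftrightarrow> a \<noteq> 0 \<and> (\<forall>x. x \<noteq> 0 \<longrightarrow> (\<exists>i::nat. x = a ^ i))"

definition shift_mat :: "'a::zero poly \<Rightarrow> nat \<Rightarrow> nat \<Rightarrow> 'a mat" where
  "shift_mat p r n = mat r n (\<lambda>(i, j). if i \<le> j then coeff p (j - i) else 0)"

definition vec_poly :: "'a::comm_semiring_1 vec \<Rightarrow> 'a poly" where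
  "vec_poly c = (\<Sum>i<dim_vec c. monom (c $ i) i)"

definition RS_code :: "nat \<Rightarrow> 'a::field poly \<Rightarrow> 'a vec set" where
  "RS_code n f = {c \<in> carrier_vec n. f dvd vec_poly c}"

end

(*
  Row i of shift_mat p r n is the coefficient vector of x^i p, so the rows of G are the
  polynomials x^i g (i < k) and x^i f (i < d - k). Writing g = f h with deg h = d - k, their
  degrees are exactly n - d, ..., n - 1, each once; hence the d x d minor on the last d columns
  is a row permutation of a triangular matrix with nonzero diagonal, and G has rank d.
  All rows are multiples of f of degree < n, and conversely every multiple f q of degree < n is
  a combination of them: dividing q = u h + v gives deg u < k, deg v < d - k and f q = u g + v f.
*)
theory Submission
  imports Defs
begin

lemma coeff_vec_poly: "coeff (vec_poly c) j = (if j < dim_vec c then c $ j else 0)"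
  unfolding vec_poly_def by (simp add: coeff_sum)

lemma degree_vec_poly_less:
  assumes "c \<in> carrier_vec n" and "0 < n"
  shows "degree (vec_poly c) < n"
proof -
  have "degree (vec_poly c) \<le> n - 1"
    by (rule degree_le) (use assms in \<open>auto simp: coeff_vec_poly\<close>)
  with assms(2) show ?thesis by linarith
qed

lemma inj_on_vec_poly: "inj_on vec_poly (carrier_vec n)"
proof (rule inj_onI)
  fix c c' assume c: "c \<in> carrier_vec n" and c': "c' \<in> carrier_vec n"
    and eq: "vec_poly c = vec_poly c'"
  show "c = c'"
  proof (rule eq_vecI)
    fix j assume "j < dim_vec c'"
    then show "c $ j = c' $ j"
      using arg_cong[OF eq, of "\<lambda>p. coeff p j"] c c' by (simp add: coeff_vec_poly)
  qed (use c c' in simp)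
qed

definition poly_rows_mat :: "nat \<Rightarrow> nat \<Rightarrow> (nat \<Rightarrow> 'a::zero poly) \<Rightarrow> 'a mat" where
  "poly_rows_mat d n p = mat d n (\<lambda>(i, j). coeff (p i) j)"

lemma dim_poly_rows_mat [simp]:
  "dim_row (poly_rows_mat d n p) = d" "dim_col (poly_rows_mat d n p) = n"
  by (simp_all add: poly_rows_mat_def)

lemma poly_rows_mat_carrier [simp]: "poly_rows_mat d n p \<in> carrier_mat d n"
  by (simp add: carrier_matI)

lemma shift_mat_eq_poly_rows_mat:
  "shift_mat p r n = poly_rows_mat r n (\<lambda>i. monom 1 i * (p :: 'a::comm_semiring_1 poly))"
  by (rule eq_matI) (auto simp: shift_mat_def poly_rows_mat_def coeff_monom_mult)

lemma append_rows_poly_rows_mat: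
  "poly_rows_mat k n p @\<^sub>r poly_rows_mat l n q =
     poly_rows_mat (k + l) n (\<lambda>i. if i < k then p i else q (i - k))"
  by (rule eq_matI)
    (auto simp: append_rows_def four_block_mat_def poly_rows_mat_def Let_def)

lemma vec_poly_transpose_mult:
  fixes p :: "nat \<Rightarrow> 'a::comm_ring_1 poly"
  assumes deg: "\<And>i. i < d \<Longrightarrow> degree (p i) < n" and y: "y \<in> carrier_vec d"
  shows "vec_poly ((poly_rows_mat d n p)\<^sup>T *\<^sub>v y) = (\<Sum>i<d. Polynomial.smult (y $ i) (p i))"
proof (rule poly_eqI)
  fix j
  have "coeff (p i) j = 0" if "i < d" "n \<le> j" for i
    using deg[OF that(1)] that(2) by (intro coeff_eq_0) linarith
  then show "coeff (vec_poly ((poly_rows_mat d n p)\<^sup>T *\<^sub>v y)) j = coeff (\<Sum>i<d. Polynomial.smult (y $ i) (p i)) j"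
    using y by (auto simp: coeff_vec_poly coeff_sum poly_rows_mat_def scalar_prod_def
        lessThan_atLeast0 mult.commute intro!: sum.cong)
qed

lemma row_space_poly_rows_mat:
  fixes p :: "nat \<Rightarrow> 'a::field poly"
  assumes deg: "\<And>i. i < d \<Longrightarrow> degree (p i) < n"
  shows "vec_space.row_space n (poly_rows_mat d n p) =
    {c \<in> carrier_vec n. \<exists>y\<in>carrier_vec d. vec_poly c = (\<Sum>i<d. Polynomial.smult (y $ i) (p i))}"
proof -
  let ?A = "poly_rows_mat d n p"
  have "?A\<^sup>T *\<^sub>v y = c \<longleftrightarrow> vec_poly c = (\<Sum>i<d. Polynomial.smult (y $ i) (p i))"
    if "c \<in> carrier_vec n" "y \<in> carrier_vec d" for c y
  proof -
    have "?A\<^sup>T *\<^sub>v y \<in> carrier_vec n" by (rule carrier_vecI) simp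
    then show ?thesis
      using inj_on_vec_poly[of n, THEN inj_onD, of "?A\<^sup>T *\<^sub>v y" c] that
        vec_poly_transpose_mult[of d p n y] deg by auto
  qed
  then show ?thesis
    using vec_space.row_space_eq[OF poly_rows_mat_carrier[of d n p]] by auto
qed

lemma (in vec_space) rank_le_nr:
  assumes "A \<in> carrier_mat n nc"
  shows "rank A \<le> n"
proof -
  have "set (cols A) \<subseteq> carrier_vec n" using cols_dim assms by blast
  then have "subspace class_ring (span (set (cols A))) V"
    using span_is_subspace by simp
  from subspace_dim[OF this fin_dim fin_dim_span_cols[OF assms]]
  show ?thesis unfolding rank_def dim_is_n by simp
qed

lemma (in vec_space) rank_eq_nr_if_nonsingular_cols:
  assumes A: "A \<in> carrier_mat n nc" and M: "M \<in> carrier_mat n n"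
    and cols: "set (cols M) \<subseteq> set (cols A)" and det: "det M \<noteq> 0"
  shows "rank A = n"
proof -
  have "rank M = n" using det_rank_iff[OF M] det by simp
  moreover have distinct: "distinct (cols M)" using non_distinct_low_rank[OF M] calculation by auto
  ultimately have "lin_indpt (set (cols M))" by (rule full_rank_lin_indpt[OF M])
  from rank_ge_card_indpt[OF A cols this] have "n \<le> rank A"
    using distinct_card[OF distinct] M by simp
  with rank_le_nr[OF A] show ?thesis by simp
qed

lemma det_coeff_window_nonzero:
  fixes p :: "nat \<Rightarrow> 'a::field poly"
  assumes nz: "\<And>i. i < d \<Longrightarrow> p i \<noteq> 0"
    and deg: "bij_betw (\<lambda>i. degree (p i)) {..<d} {e..<e + d}"
  shows "det (mat d d (\<lambda>(i, c). coeff (p i) (e + c))) \<noteq> 0"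
proof -
  let ?W = "mat d d (\<lambda>(i, c). coeff (p i) (e + c))"
  \<comment> \<open>Row \<open>r\<close> of degree \<open>e + c0\<close>, with \<open>c0\<close> the first nonzero entry of \<open>v\<close>, meets \<open>v\<close> only there.\<close>
  have "v = 0\<^sub>v d" if v: "v \<in> carrier_vec d" and Wv: "?W *\<^sub>v v = 0\<^sub>v d" for v
  proof (rule ccontr)
    assume "v \<noteq> 0\<^sub>v d"
    then obtain i where i: "i < d" "v $ i \<noteq> 0" using v by (metis eq_vecI carrier_vecD index_zero_vec)
    define c0 where "c0 = (LEAST c. v $ c \<noteq> 0)"
    have c0: "v $ c0 \<noteq> 0" "c0 < d"
      using LeastI[of "\<lambda>c. v $ c \<noteq> 0", OF i(2)] Least_le[of "\<lambda>c. v $ c \<noteq> 0", OF i(2)] i(1)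
      unfolding c0_def by auto
    have below: "v $ c = 0" if "c < c0" for c
      using not_less_Least[OF that[unfolded c0_def]] by simp
    have "e + c0 \<in> (\<lambda>i. degree (p i)) ` {..<d}"
      using deg c0(2) by (simp add: bij_betw_def)
    then obtain r where r: "r < d" "degree (p r) = e + c0" by auto
    have "(?W *\<^sub>v v) $ r = (\<Sum>c<d. coeff (p r) (e + c) * v $ c)"
      using v r by (simp add: scalar_prod_def lessThan_atLeast0)
    also have "\<dots> = (\<Sum>c\<in>{c0}. coeff (p r) (e + c) * v $ c)"
    proof (rule sum.mono_neutral_right)
      show "\<forall>c\<in>{..<d} - {c0}. coeff (p r) (e + c) * v $ c = 0"
      proof
        fix c assume c: "c \<in> {..<d} - {c0}"
        show "coeff (p r) (e + c) * v $ c = 0"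
        proof (cases "c < c0")
          case False
          with c have "degree (p r) < e + c" using r(2) by auto
          then show ?thesis by (simp add: coeff_eq_0)
        qed (simp add: below)
      qed
    qed (use c0 in auto)
    also have "\<dots> \<noteq> 0" using r nz c0(1) by (simp flip: r(2))
    finally show False using Wv r(1) by simp
  qed
  then show ?thesis
    using det_0_iff_vec_prod_zero_field[of ?W d] by auto
qed

lemma rank_poly_rows_mat:
  fixes p :: "nat \<Rightarrow> 'a::field poly"
  assumes "d \<le> n" and nz: "\<And>i. i < d \<Longrightarrow> p i \<noteq> 0"
    and deg: "bij_betw (\<lambda>i. degree (p i)) {..<d} {n - d..<n}"
  shows "vec_space.rank d (poly_rows_mat d n p) = d"
proof -
  let ?W = "mat d d (\<lambda>(i, c). coeff (p i) (n - d + c))"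
  have "det ?W \<noteq> 0"
    by (rule det_coeff_window_nonzero) (use nz deg \<open>d \<le> n\<close> in auto)
  moreover have "set (cols ?W) \<subseteq> set (cols (poly_rows_mat d n p))"
  proof
    fix w assume "w \<in> set (cols ?W)"
    then obtain c where c: "c < d" and w: "w = col ?W c" by (auto simp: in_set_conv_nth)
    have "w = col (poly_rows_mat d n p) (n - d + c)"
      unfolding w by (rule eq_vecI) (use c \<open>d \<le> n\<close> in \<open>auto simp: poly_rows_mat_def\<close>)
    with c \<open>d \<le> n\<close> show "w \<in> set (cols (poly_rows_mat d n p))"
      by (auto simp: in_set_conv_nth intro!: exI[of _ "n - d + c"])
  qed
  ultimately show ?thesis
    by (intro vec_space.rank_eq_nr_if_nonsingular_cols) auto
qed

lemma sum_lessThan_add: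
  fixes g :: "nat \<Rightarrow> 'a::comm_monoid_add"
  shows "sum g {..<k + l} = sum g {..<k} + (\<Sum>s<l. g (k + s))"
  by (induction l) (simp_all add: add.assoc)

lemma sum_monom_coeff_eq:
  assumes "\<And>j. N \<le> j \<Longrightarrow> coeff p j = 0"
  shows "(\<Sum>i<N. monom (coeff p i) i) = p"
proof -
  have "(\<Sum>i<N. monom (coeff p i) i) = (\<Sum>i\<le>degree p + N. monom (coeff p i) i)"
    by (rule sum.mono_neutral_left) (auto simp: assms)
  also have "\<dots> = p" by (rule poly_as_sum_of_monoms') simp
  finally show ?thesis .
qed

definition stacked_shift_rows :: "nat \<Rightarrow> 'a::comm_semiring_1 poly \<Rightarrow> 'a poly \<Rightarrow> nat \<Rightarrow> 'a poly" where
  "stacked_shift_rows k g f i = (if i < k then monom 1 i * g else monom 1 (i - k) * f)"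

lemma shift_mat_append_rows:
  "shift_mat g k n @\<^sub>r shift_mat f l n = poly_rows_mat (k + l) n (stacked_shift_rows k g f)"
  unfolding shift_mat_eq_poly_rows_mat append_rows_poly_rows_mat stacked_shift_rows_def ..

lemma sum_smult_stacked_shift_rows:
  "(\<Sum>i<k + l. Polynomial.smult (y $ i) (stacked_shift_rows k g f i)) =
     (\<Sum>i<k. monom (y $ i) i) * g + (\<Sum>s<l. monom (y $ (k + s)) s) * f"
  unfolding sum_lessThan_add sum_distrib_right
  by (simp add: stacked_shift_rows_def smult_monom_mult)

lemma degree_stacked_shift_rows:
  fixes f g :: "'a::idom poly"
  assumes "f \<noteq> 0" "g \<noteq> 0"
  shows "degree (stacked_shift_rows k g f i) =
    (if i < k then i + degree g else i - k + degree f)"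
  using assms by (simp add: stacked_shift_rows_def degree_mult_eq degree_monom_eq)

lemma bij_betw_degree_stacked_shift_rows:
  fixes f g :: "'a::idom poly"
  assumes "f \<noteq> 0" "g \<noteq> 0" and "degree g = degree f + l"
  shows "bij_betw (\<lambda>i. degree (stacked_shift_rows k g f i)) {..<k + l}
    {degree f..<degree f + k + l}"
  by (rule bij_betw_byWitness[where
        f' = "\<lambda>j. if degree f + l \<le> j then j - degree f - l else k + (j - degree f)"])
    (use assms in \<open>auto simp: degree_stacked_shift_rows\<close>)

lemma multiple_eq_sum_stacked_shift_rows:
  fixes f h :: "'a::field poly"
  assumes "f \<noteq> 0" "h \<noteq> 0" "degree h = l"
    and "p = f * q" "degree p < degree f + k + l"
  obtains y where "y \<in> carrier_vec (k + l)"
    and "p = (\<Sum>i<k + l. Polynomial.smult (y $ i) (stacked_shift_rows k (f * h) f i))"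
proof -
  define u where "u = q div h"
  define v where "v = q mod h"
  have q: "q = u * h + v" unfolding u_def v_def by simp
  have deg_q: "degree q < k + l \<or> q = 0"
    using assms by (auto simp: degree_mult_eq)
  have deg_v: "degree v < l \<or> v = 0"
    using degree_mod_less[OF \<open>h \<noteq> 0\<close>, of q] assms(3) unfolding v_def by auto
  have deg_u: "degree u < k \<or> u = 0"
  proof (cases "u = 0")
    case False
    have "degree (u * h) = degree u + l" using False assms(2,3) by (simp add: degree_mult_eq)
    moreover have "degree (u * h) \<le> max (degree q) (degree v)"
      using degree_diff_le_max[of q v] q by (simp add: algebra_simps)
    ultimately show ?thesis using deg_q deg_v False by (auto simp: u_def)
  qed simp
  have "(\<Sum>i<k. monom (coeff u i) i) = u"
    by (rule sum_monom_coeff_eq) (use deg_u in \<open>auto intro: coeff_eq_0\<close>)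
  moreover have "(\<Sum>s<l. monom (coeff v s) s) = v"
    by (rule sum_monom_coeff_eq) (use deg_v in \<open>auto intro: coeff_eq_0\<close>)
  ultimately have "p = (\<Sum>i<k. monom (coeff u i) i) * (f * h) + (\<Sum>s<l. monom (coeff v s) s) * f"
    using assms(4) q by (simp add: algebra_simps)
  then show ?thesis
    using that[of "vec (k + l) (\<lambda>i. if i < k then coeff u i else coeff v (i - k))"]
    unfolding sum_smult_stacked_shift_rows by simp
qed

lemma dvd_stacked_shift_rows: "f dvd stacked_shift_rows k (f * h) f i"
  by (simp add: stacked_shift_rows_def)

lemma stacked_shift_rows_nonzero:
  fixes f g :: "'a::idom poly"
  assumes "f \<noteq> 0" "g \<noteq> 0"
  shows "stacked_shift_rows k g f i \<noteq> 0"
  using assms by (simp add: stacked_shift_rows_def)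

lemma rank_row_space_shift_mat_append_rows:
  fixes f h :: "'a::field poly"
  assumes "f \<noteq> 0" "h \<noteq> 0" and deg_f: "degree f = n - d" and "degree h = d - k"
    and "k \<le> d" "d < n"
  defines "G \<equiv> shift_mat (f * h) k n @\<^sub>r shift_mat f (d - k) n"
  shows "vec_space.rank d G = d \<and> vec_space.row_space n G = RS_code n f"
proof -
  let ?p = "stacked_shift_rows k (f * h) f"
  have d: "k + (d - k) = d" and n: "degree f + k + (d - k) = n"
    using assms by auto
  have G: "G = poly_rows_mat d n ?p"
    unfolding G_def shift_mat_append_rows d ..
  have nz: "?p i \<noteq> 0" for i
    using assms by (simp add: stacked_shift_rows_nonzero)
  have "degree (f * h) = degree f + (d - k)"
    using assms by (simp add: degree_mult_eq)
  then have bij: "bij_betw (\<lambda>i. degree (?p i)) {..<d} {n - d..<n}"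
    using bij_betw_degree_stacked_shift_rows[of f "f * h" "d - k" k] assms
    unfolding d n by (simp add: deg_f)
  then have deg: "degree (?p i) < n" if "i < d" for i
    using that by (auto dest: bij_betw_apply)
  have "f dvd vec_poly c \<longleftrightarrow>
      (\<exists>y\<in>carrier_vec d. vec_poly c = (\<Sum>i<d. Polynomial.smult (y $ i) (?p i)))"
    if c: "c \<in> carrier_vec n" for c
  proof
    assume "f dvd vec_poly c"
    then obtain q where "vec_poly c = f * q" by (elim dvdE)
    moreover have "degree (vec_poly c) < n"
      using degree_vec_poly_less[OF c] \<open>d < n\<close> by simp
    ultimately obtain y where "y \<in> carrier_vec d"
      and "vec_poly c = (\<Sum>i<d. Polynomial.smult (y $ i) (?p i))"
      using multiple_eq_sum_stacked_shift_rows[of f h "d - k" "vec_poly c" q k] assms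
      unfolding d n by blast
    then show "\<exists>y\<in>carrier_vec d. vec_poly c = (\<Sum>i<d. Polynomial.smult (y $ i) (?p i))"
      by blast
  qed (auto intro!: dvd_sum dvd_smult dvd_stacked_shift_rows)
  moreover have "vec_space.row_space n G =
      {c \<in> carrier_vec n. \<exists>y\<in>carrier_vec d. vec_poly c = (\<Sum>i<d. Polynomial.smult (y $ i) (?p i))}"
    unfolding G by (rule row_space_poly_rows_mat) (rule deg)
  ultimately have "vec_space.row_space n G = RS_code n f"
    unfolding RS_code_def by auto
  moreover have "vec_space.rank d G = d"
    unfolding G by (rule rank_poly_rows_mat) (use nz bij \<open>d < n\<close> in auto)
  ultimately show ?thesis by simp
qed

lemma linear_factors_prod:
  fixes x :: "nat \<Rightarrow> 'a::idom"
  assumes "finite A"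
  shows "(\<Prod>j\<in>A. [:- x j, 1:]) \<noteq> 0" and "degree (\<Prod>j\<in>A. [:- x j, 1:]) = card A"
  using assms by (simp_all add: degree_prod_sum_eq)

theorem theorem3:
  fixes a :: "'a::{field,finite}" and m n k d :: nat
  assumes "card (UNIV :: 'a set) = 2 ^ m"
    and "primitive_element a"
    and "n \<le> 2 ^ m - 1"
    and "1 \<le> k" and "k \<le> d" and "d \<le> n - 1"
  defines "g \<equiv> (\<Prod>j = 1..n - k. [:- (a ^ j), 1:])"
    and "f \<equiv> (\<Prod>j = 1..n - d. [:- (a ^ j), 1:])"
  defines "G \<equiv> shift_mat g k n @\<^sub>r shift_mat f (d - k) n"
  shows "vec_space.rank d G = d \<and> vec_space.row_space n G = RS_code n f"
proof -
  have "d < n" using assms(4-6) by linarith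
  define h where "h = (\<Prod>j = n - d + 1..n - d + (d - k). [:- (a ^ j), 1:])"
  have "n - k = n - d + (d - k)" using \<open>d < n\<close> \<open>k \<le> d\<close> by simp
  then have "g = f * h" unfolding g_def f_def h_def
    by (simp only:) (rule prod.ub_add_nat, simp)
  moreover have "f \<noteq> 0" "h \<noteq> 0" "degree f = n - d" "degree h = d - k"
    unfolding f_def h_def by (simp_all add: linear_factors_prod)
  ultimately show ?thesis
    unfolding G_def using rank_row_space_shift_mat_append_rows assms(5) \<open>d < n\<close> by blast
qed

end
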